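(* Let $\mathbf{X}\sim\mathcal{MSP}(\boldsymbol{\mu},\mathbf{K})$ be a $p$-variate $L^2$-continuous process on a compact interval $\mathcal{T}$ with uncorrelated components $X_j\in L^2(\mathcal{T})$, $j=1,\dots,p$, so that $\mathbf{K}=\mathrm{diag}(\kappa_1,\dots,\kappa_p)$ and the covariance operator is $\mathcal{C}=\mathrm{diag}(\mathcal{K}_1,\dots,\mathcal{K}_p)$, where $\mathcal{K}_j$ is the integral operator with kernel $\kappa_j$. Let $\pi_1\ge\dots\ge\pi_M>\pi_{M+1}$ be the $M$ largest eigenvalues of $\mathcal{C}$ (with $\pi_M>0$). For $j=1,\dots,p$ let $(\lambda_i^{(j)},\xi_i^{(j)})$, $i\ge1$, be the eigenpairs of $\mathcal{K}_j$ with $\lambda^{(j)}_1\ge\lambda^{(j)}_2\ge\cdots$, and let $m_j=|\{\lambda_1^{(j)},\dots,\lambda_M^{(j)}\}\cap\{\pi_1,\dots,\pi_M\}|$ be the number of eigenvalues of $\mathcal{K}_j$ belonging to $\{\pi_1,\dots,\pi_M\}$, counting multiplicities in $\{\lambda_1^{(j)},\dots,\lambda_M^{(j)}\}$. Then, for $M=m_1+\dots+m_p$, $$\mathrm{fMMD}^2(\mathbf{X},\boldsymbol{\mu};\mathbf{K},M)=\sum_{j=1}^p\mathrm{fmd}^2(X_j,\mu_j;\kappa_j,m_j).$$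
   Context: $\mathcal{H}=L^2(\mathcal{T})^p$ with inner product $\langle\mathbf{x},\mathbf{y}\rangle=\sum_j\int_{\mathcal{T}}x_jy_j$. For a $p$-variate $L^2$-continuous process $\mathbf{X}$ with mean $\boldsymbol{\mu}(t)=E\mathbf{X}(t)$ and covariance kernel $\mathbf{K}(s,t)=[\mathrm{Cov}(X_i(s),X_j(t))]$ (written $\mathbf{X}\sim\mathcal{MSP}(\boldsymbol{\mu},\mathbf{K})$), the covariance operator is $\mathcal{C}\mathbf{x}(s)=\int\mathbf{K}(s,t)\mathbf{x}(t)dt$ with orthonormal eigenfunctions $\boldsymbol{\psi}_k$ and nonincreasing eigenvalues $\pi_k$; for $\pi_M>0$, $\mathrm{fMMD}^2(\mathbf{X},\boldsymbol{\mu};\mathbf{K},M)=\sum_{k=1}^M\pi_k^{-1}\langle\mathbf{X}-\boldsymbol{\mu},\boldsymbol{\psi}_k\rangle^2$. For a univariate process $X\in L^2(\mathcal{T})$ with mean $\mu$ and covariance kernel $\kappa$, with eigenpairs $(\lambda_i,\xi_i)$ of the integral operator with kernel $\kappa$ ($\lambda_1\ge\dots\ge\lambda_m>0$), $\mathrm{fmd}^2(X,\mu;\kappa,m)=\sum_{i=1}^m\lambda_i^{-1}\langle X-\mu,\xi_i\rangle^2$ with $\langle f,g\rangle=\int_{\mathcal{T}}fg$. *)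

theory Defs
  imports "HOL-Probability.Probability"
begin

definition L2 :: "real set \<Rightarrow> (real \<Rightarrow> real) \<Rightarrow> bool" where
  "L2 T f \<longleftrightarrow> f \<in> borel_measurable (lebesgue_on T)
      \<and> integrable (lebesgue_on T) (\<lambda>t. (f t)\<^sup>2)"

definition ip1 :: "real set \<Rightarrow> (real \<Rightarrow> real) \<Rightarrow> (real \<Rightarrow> real) \<Rightarrow> real" where
  "ip1 T f g = (\<integral>t. f t * g t \<partial>(lebesgue_on T))"

definition intop :: "real set \<Rightarrow> (real \<Rightarrow> real \<Rightarrow> real) \<Rightarrow> (real \<Rightarrow> real) \<Rightarrow> real \<Rightarrow> real" where
  "intop T \<kappa> f s = (\<integral>t. \<kappa> s t * f t \<partial>(lebesgue_on T))"

text \<open>(lam, xi) (indexed from 0) is the sequence of eigenpairs of the integral operator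
  with kernel kappa, with nonincreasing eigenvalues: the xi i are orthonormal
  eigenfunctions with eigenvalues lam i, and they exhaust the eigendecomposition
  (every element orthogonal to all xi i lies in the kernel of the operator).\<close>
definition eigensys1 :: "real set \<Rightarrow> (real \<Rightarrow> real \<Rightarrow> real) \<Rightarrow> (nat \<Rightarrow> real) \<Rightarrow> (nat \<Rightarrow> real \<Rightarrow> real) \<Rightarrow> bool" where
  "eigensys1 T \<kappa> lam xi \<longleftrightarrow>
     (\<forall>i. L2 T (xi i)) \<and>
     (\<forall>i k. ip1 T (xi i) (xi k) = (if i = k then 1 else 0)) \<and>
     (\<forall>i. \<forall>s\<in>T. intop T \<kappa> (xi i) s = lam i * xi i s) \<and>
     decseq lam \<and>
     (\<forall>f. L2 T f \<longrightarrow> (\<forall>i. ip1 T f (xi i) = 0) \<longrightarrow> (\<forall>s\<in>T. intop T \<kappa> f s = 0))"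

definition fmd2 :: "real set \<Rightarrow> (real \<Rightarrow> real) \<Rightarrow> (real \<Rightarrow> real) \<Rightarrow> (nat \<Rightarrow> real) \<Rightarrow> (nat \<Rightarrow> real \<Rightarrow> real) \<Rightarrow> nat \<Rightarrow> real" where
  "fmd2 T x \<mu> lam xi m = (\<Sum>i<m. (ip1 T (\<lambda>t. x t - \<mu> t) (xi i))\<^sup>2 / lam i)"

text \<open>Elements of H are represented as x :: nat => real => real, component j (j < p) being x j.\<close>
definition inH :: "nat \<Rightarrow> real set \<Rightarrow> (nat \<Rightarrow> real \<Rightarrow> real) \<Rightarrow> bool" where
  "inH p T x \<longleftrightarrow> (\<forall>j<p. L2 T (x j))"

definition ipH :: "nat \<Rightarrow> real set \<Rightarrow> (nat \<Rightarrow> real \<Rightarrow> real) \<Rightarrow> (nat \<Rightarrow> real \<Rightarrow> real) \<Rightarrow> real" where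
  "ipH p T x y = (\<Sum>j<p. ip1 T (x j) (y j))"

definition covop :: "nat \<Rightarrow> real set \<Rightarrow> (nat \<Rightarrow> nat \<Rightarrow> real \<Rightarrow> real \<Rightarrow> real) \<Rightarrow> (nat \<Rightarrow> real \<Rightarrow> real) \<Rightarrow> nat \<Rightarrow> real \<Rightarrow> real" where
  "covop p T K x i s = (\<Sum>j<p. \<integral>t. K i j s t * x j t \<partial>(lebesgue_on T))"

definition eigensysH :: "nat \<Rightarrow> real set \<Rightarrow> (nat \<Rightarrow> nat \<Rightarrow> real \<Rightarrow> real \<Rightarrow> real) \<Rightarrow> (nat \<Rightarrow> real) \<Rightarrow> (nat \<Rightarrow> nat \<Rightarrow> real \<Rightarrow> real) \<Rightarrow> bool" where
  "eigensysH p T K \<pi>s psi \<longleftrightarrow>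
     (\<forall>k. inH p T (psi k)) \<and>
     (\<forall>k l. ipH p T (psi k) (psi l) = (if k = l then 1 else 0)) \<and>
     (\<forall>k. \<forall>i<p. \<forall>s\<in>T. covop p T K (psi k) i s = \<pi>s k * psi k i s) \<and>
     decseq \<pi>s \<and>
     (\<forall>x. inH p T x \<longrightarrow> (\<forall>k. ipH p T x (psi k) = 0) \<longrightarrow>
          (\<forall>i<p. \<forall>s\<in>T. covop p T K x i s = 0))"

definition fMMD2 :: "nat \<Rightarrow> real set \<Rightarrow> (nat \<Rightarrow> real \<Rightarrow> real) \<Rightarrow> (nat \<Rightarrow> real \<Rightarrow> real) \<Rightarrow> (nat \<Rightarrow> real) \<Rightarrow> (nat \<Rightarrow> nat \<Rightarrow> real \<Rightarrow> real) \<Rightarrow> nat \<Rightarrow> real" where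
  "fMMD2 p T x \<mu> \<pi>s psi M =
     (\<Sum>k<M. (ipH p T (\<lambda>j t. x j t - \<mu> j t) (psi k))\<^sup>2 / \<pi>s k)"

text \<open>X w j t = value of component j at time t for the sample point w.\<close>
definition mean_fun :: "'w measure \<Rightarrow> ('w \<Rightarrow> nat \<Rightarrow> real \<Rightarrow> real) \<Rightarrow> nat \<Rightarrow> real \<Rightarrow> real" where
  "mean_fun P X j t = (\<integral>w. X w j t \<partial>P)"

definition cov_kernel :: "'w measure \<Rightarrow> ('w \<Rightarrow> nat \<Rightarrow> real \<Rightarrow> real) \<Rightarrow> nat \<Rightarrow> nat \<Rightarrow> real \<Rightarrow> real \<Rightarrow> real" where
  "cov_kernel P X i j s t =
     (\<integral>w. (X w i s - mean_fun P X i s) * (X w j t - mean_fun P X j t) \<partial>P)"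

definition L2_cont_process :: "'w measure \<Rightarrow> nat \<Rightarrow> real set \<Rightarrow> ('w \<Rightarrow> nat \<Rightarrow> real \<Rightarrow> real) \<Rightarrow> bool" where
  "L2_cont_process P p T X \<longleftrightarrow>
     prob_space P \<and>
     (\<forall>j<p. \<forall>t\<in>T. (\<lambda>w. X w j t) \<in> borel_measurable P
                  \<and> integrable P (\<lambda>w. (X w j t)\<^sup>2)) \<and>
     (\<forall>j<p. \<forall>t\<in>T. ((\<lambda>s. \<integral>w. (X w j s - X w j t)\<^sup>2 \<partial>P) \<longlongrightarrow> 0) (at t within T)) \<and>
     (\<forall>w\<in>space P. inH p T (X w))"

end

theory Submission
  imports Defs
begin

text \<open>
  Because the covariance kernel is diagonal, the covariance operator acts componentwise: an
  eigenfunction of \<open>K\<^sub>j\<close> placed in component \<open>j\<close> is an eigenvector of the covariance operator,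
  and each component of an eigenvector of the covariance operator is an eigenfunction of \<open>K\<^sub>j\<close>
  with the same eigenvalue. Hence for an eigenvalue \<open>\<nu> \<ge> \<pi>\<^sub>M > 0\<close> the \<open>\<nu>\<close>-eigenspace
  is spanned both by the \<open>\<psi>\<^sub>k\<close> with \<open>\<pi>\<^sub>k = \<nu>\<close> and by the embedded eigenfunctions of the
  \<open>K\<^sub>j\<close> with eigenvalue \<open>\<nu>\<close>, so the squared coordinates of \<open>X - \<mu>\<close> have the same sum in
  both orthonormal bases. The gap \<open>\<pi>\<^sub>M > \<pi>\<^sub>M\<^sub>+\<^sub>1\<close> makes \<open>\<pi>\<^sub>1, \<dots>, \<pi>\<^sub>M\<close>
  exactly the eigenvalues that are at least \<open>\<pi>\<^sub>M\<close>, and Bessel's inequality shows that the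
  first \<open>m\<^sub>j\<close> eigenvalues of \<open>K\<^sub>j\<close> are exactly those that are at least \<open>\<pi>\<^sub>M\<close>; regrouping
  both sides of the identity by eigenvalue proves it. That the covariance operator is defined
  and self-adjoint comes from the continuity of the covariance kernel, which follows from
  mean-square continuity by the Cauchy-Schwarz inequality.
\<close>

section \<open>Square-integrable functions\<close>

definition square_integrable :: "'a measure \<Rightarrow> ('a \<Rightarrow> real) \<Rightarrow> bool" where
  "square_integrable M f \<longleftrightarrow> f \<in> borel_measurable M \<and> integrable M (\<lambda>x. (f x)\<^sup>2)"

lemma L2_iff_square_integrable: "L2 T f \<longleftrightarrow> square_integrable (lebesgue_on T) f"
  unfolding L2_def square_integrable_def ..

lemma square_integrable_imp_integrable_mult:
  assumes f: "square_integrable M f" and g: "square_integrable M g"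
  shows "integrable M (\<lambda>x. f x * g x)"
proof (rule Bochner_Integration.integrable_bound)
  show "integrable M (\<lambda>x. (f x)\<^sup>2 + (g x)\<^sup>2)"
    using f g unfolding square_integrable_def by simp
  show "(\<lambda>x. f x * g x) \<in> borel_measurable M"
    using f g unfolding square_integrable_def by (auto intro!: borel_measurable_times)
  show "AE x in M. norm (f x * g x) \<le> norm ((f x)\<^sup>2 + (g x)\<^sup>2)"
  proof (rule AE_I2)
    fix x
    have "\<bar>f x * g x\<bar> \<le> 2 * \<bar>f x\<bar> * \<bar>g x\<bar>" by (simp add: abs_mult)
    also have "\<dots> \<le> (f x)\<^sup>2 + (g x)\<^sup>2"
      using sum_squares_bound[of "\<bar>f x\<bar>" "\<bar>g x\<bar>"] by simp
    finally show "norm (f x * g x) \<le> norm ((f x)\<^sup>2 + (g x)\<^sup>2)" by simp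
  qed
qed

lemma square_integrable_cmult: "square_integrable M f \<Longrightarrow> square_integrable M (\<lambda>x. c * f x)"
  unfolding square_integrable_def by (auto simp: power_mult_distrib intro!: borel_measurable_times)

lemma square_integrable_add:
  assumes f: "square_integrable M f" and g: "square_integrable M g"
  shows "square_integrable M (\<lambda>x. f x + g x)"
  unfolding square_integrable_def
proof
  show "(\<lambda>x. f x + g x) \<in> borel_measurable M"
    using f g unfolding square_integrable_def by (auto intro!: borel_measurable_add)
  have "integrable M (\<lambda>x. (f x)\<^sup>2 + (g x)\<^sup>2 + 2 * (f x * g x))"
    using f g square_integrable_imp_integrable_mult[OF f g] unfolding square_integrable_def by simp
  then show "integrable M (\<lambda>x. (f x + g x)\<^sup>2)"
    by (simp add: power2_sum mult.assoc)
qed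

lemma square_integrable_diff:
  "square_integrable M f \<Longrightarrow> square_integrable M g \<Longrightarrow> square_integrable M (\<lambda>x. f x - g x)"
  using square_integrable_add[of M f "\<lambda>x. -1 * g x"] square_integrable_cmult[of M g "-1"] by simp

lemma square_integrable_zero: "square_integrable M (\<lambda>x. 0)"
  unfolding square_integrable_def by simp

lemma square_integrable_sum:
  "finite F \<Longrightarrow> (\<And>k. k \<in> F \<Longrightarrow> square_integrable M (f k)) \<Longrightarrow>
   square_integrable M (\<lambda>x. \<Sum>k\<in>F. f k x)"
  by (induction F rule: finite_induct) (simp_all add: square_integrable_zero square_integrable_add)

lemma (in finite_measure) square_integrable_const: "square_integrable M (\<lambda>x. c)"
  unfolding square_integrable_def by simp

lemma (in finite_measure) integrable_if_square_integrable:
  "square_integrable M f \<Longrightarrow> integrable M f"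
  unfolding square_integrable_def using square_integrable_imp_integrable by blast

lemma integral_square_nonneg: "0 \<le> (\<integral>x. (f x)\<^sup>2 \<partial>M)" for f :: "'a \<Rightarrow> real"
  by (intro integral_nonneg_AE AE_I2) simp

lemma Cauchy_Schwarz_integral:
  assumes f: "square_integrable M f" and g: "square_integrable M g"
  shows "(\<integral>x. f x * g x \<partial>M)\<^sup>2 \<le> (\<integral>x. (f x)\<^sup>2 \<partial>M) * (\<integral>x. (g x)\<^sup>2 \<partial>M)"
proof -
  define A where "A = (\<integral>x. (f x)\<^sup>2 \<partial>M)"
  define B where "B = (\<integral>x. f x * g x \<partial>M)"
  define C where "C = (\<integral>x. (g x)\<^sup>2 \<partial>M)"
  have quadratic_nonneg: "0 \<le> A - 2 * r * B + r\<^sup>2 * C" for r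
  proof -
    have "0 \<le> (\<integral>x. (f x - r * g x)\<^sup>2 \<partial>M)" by (rule integral_square_nonneg)
    also have "\<dots> = (\<integral>x. (f x)\<^sup>2 - (2 * r) * (f x * g x) + r\<^sup>2 * (g x)\<^sup>2 \<partial>M)"
      by (rule Bochner_Integration.integral_cong) (simp_all add: power2_eq_square algebra_simps)
    also have "\<dots> = A - 2 * r * B + r\<^sup>2 * C"
      using f g square_integrable_imp_integrable_mult[OF f g] unfolding A_def B_def C_def square_integrable_def
      by simp
    finally show ?thesis .
  qed
  have "0 \<le> C" unfolding C_def by (rule integral_square_nonneg)
  show ?thesis
  proof (cases "C = 0")
    case True
    have "B = 0"
    proof (rule ccontr)
      assume "B \<noteq> 0"
      then have "0 \<le> A - (A + 1)" using quadratic_nonneg[of "(A + 1) / (2 * B)"] True by simp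
      then show False by simp
    qed
    then show ?thesis using True unfolding A_def B_def C_def by simp
  next
    case False
    with \<open>0 \<le> C\<close> have "0 < C" by simp
    have "0 \<le> A - 2 * (B / C) * B + (B / C)\<^sup>2 * C" by (rule quadratic_nonneg)
    also have "\<dots> = A - B\<^sup>2 / C" using \<open>0 < C\<close> by (simp add: field_simps power2_eq_square)
    finally have "B\<^sup>2 \<le> A * C" using \<open>0 < C\<close> by (simp add: field_simps)
    then show ?thesis unfolding A_def B_def C_def .
  qed
qed

lemma abs_integral_mult_le:
  assumes "square_integrable M f" and "square_integrable M g"
  shows "\<bar>\<integral>x. f x * g x \<partial>M\<bar> \<le> sqrt ((\<integral>x. (f x)\<^sup>2 \<partial>M) * (\<integral>x. (g x)\<^sup>2 \<partial>M))"
  using real_sqrt_le_mono[OF Cauchy_Schwarz_integral[OF assms]] by simp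

section \<open>The space \<open>L\<^sup>2(T)\<^sup>p\<close>\<close>

lemma L2_diff: "L2 T f \<Longrightarrow> L2 T g \<Longrightarrow> L2 T (\<lambda>t. f t - g t)"
  unfolding L2_iff_square_integrable by (rule square_integrable_diff)

lemma L2_lincomb:
  "finite F \<Longrightarrow> (\<And>k. k \<in> F \<Longrightarrow> L2 T (f k)) \<Longrightarrow> L2 T (\<lambda>t. \<Sum>k\<in>F. c k * f k t)"
  unfolding L2_iff_square_integrable by (intro square_integrable_sum square_integrable_cmult)

lemma L2_zero: "L2 T (\<lambda>t. 0)"
  unfolding L2_iff_square_integrable by (rule square_integrable_zero)

lemma L2_imp_integrable_mult: "L2 T f \<Longrightarrow> L2 T g \<Longrightarrow> integrable (lebesgue_on T) (\<lambda>t. f t * g t)"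
  unfolding L2_iff_square_integrable by (rule square_integrable_imp_integrable_mult)

lemma L2_imp_integrable: "T \<in> lmeasurable \<Longrightarrow> L2 T f \<Longrightarrow> integrable (lebesgue_on T) f"
  unfolding L2_iff_square_integrable
  by (rule finite_measure.integrable_if_square_integrable[OF finite_measure_lebesgue_on])

lemma ip1_cong:
  "(\<And>t. t \<in> T \<Longrightarrow> f t = f' t) \<Longrightarrow> (\<And>t. t \<in> T \<Longrightarrow> g t = g' t) \<Longrightarrow> ip1 T f g = ip1 T f' g'"
  unfolding ip1_def by (rule Bochner_Integration.integral_cong) auto

lemma ip1_commute: "ip1 T f g = ip1 T g f"
  unfolding ip1_def by (simp add: mult.commute)

lemma ip1_zero_left [simp]: "ip1 T (\<lambda>t. 0) g = 0"
  unfolding ip1_def by simp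

lemma ip1_zero_right [simp]: "ip1 T f (\<lambda>t. 0) = 0"
  unfolding ip1_def by simp

lemma ip1_cmult_left: "ip1 T (\<lambda>t. c * f t) g = c * ip1 T f g"
  unfolding ip1_def by (simp add: mult.assoc)

lemma ip1_diff_left:
  "L2 T f \<Longrightarrow> L2 T h \<Longrightarrow> L2 T g \<Longrightarrow> ip1 T (\<lambda>t. f t - h t) g = ip1 T f g - ip1 T h g"
  unfolding ip1_def left_diff_distrib
  by (intro Bochner_Integration.integral_diff L2_imp_integrable_mult)

lemma ip1_lincomb_left:
  assumes F: "finite F" and f: "\<And>k. k \<in> F \<Longrightarrow> L2 T (f k)" and g: "L2 T g"
  shows "ip1 T (\<lambda>t. \<Sum>k\<in>F. c k * f k t) g = (\<Sum>k\<in>F. c k * ip1 T (f k) g)"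
proof -
  have "ip1 T (\<lambda>t. \<Sum>k\<in>F. c k * f k t) g = (\<integral>t. (\<Sum>k\<in>F. c k * (f k t * g t)) \<partial>lebesgue_on T)"
    unfolding ip1_def by (simp add: sum_distrib_right mult.assoc)
  also have "\<dots> = (\<Sum>k\<in>F. c k * ip1 T (f k) g)"
    unfolding ip1_def using L2_imp_integrable_mult[OF f g] by (subst Bochner_Integration.integral_sum) auto
  finally show ?thesis .
qed

lemma ip1_self_nonneg: "0 \<le> ip1 T f f"
  unfolding ip1_def by (intro integral_nonneg_AE AE_I2) simp

lemma inH_diff: "inH p T x \<Longrightarrow> inH p T y \<Longrightarrow> inH p T (\<lambda>j t. x j t - y j t)"
  unfolding inH_def by (simp add: L2_diff)

lemma inH_lincomb:
  "finite F \<Longrightarrow> (\<And>k. k \<in> F \<Longrightarrow> inH p T (v k)) \<Longrightarrow> inH p T (\<lambda>j t. \<Sum>k\<in>F. c k * v k j t)"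
  unfolding inH_def by (auto intro: L2_lincomb)

lemma ipH_cong:
  "(\<And>j t. j < p \<Longrightarrow> t \<in> T \<Longrightarrow> x j t = x' j t) \<Longrightarrow> (\<And>j t. j < p \<Longrightarrow> t \<in> T \<Longrightarrow> y j t = y' j t) \<Longrightarrow>
   ipH p T x y = ipH p T x' y'"
  unfolding ipH_def by (intro sum.cong refl ip1_cong) auto

lemma ipH_commute: "ipH p T x y = ipH p T y x"
  unfolding ipH_def by (simp add: ip1_commute)

lemma ipH_zero_left [simp]: "ipH p T (\<lambda>j t. 0) y = 0"
  unfolding ipH_def by simp

lemma ipH_cmult_left: "ipH p T (\<lambda>j t. c * x j t) y = c * ipH p T x y"
  unfolding ipH_def by (simp add: ip1_cmult_left sum_distrib_left)

lemma ipH_cmult_right: "ipH p T x (\<lambda>j t. c * y j t) = c * ipH p T x y"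
  using ipH_cmult_left[of p T c y x] by (simp add: ipH_commute)

lemma ipH_diff_left:
  "inH p T x \<Longrightarrow> inH p T z \<Longrightarrow> inH p T y \<Longrightarrow>
   ipH p T (\<lambda>j t. x j t - z j t) y = ipH p T x y - ipH p T z y"
  unfolding ipH_def inH_def by (simp add: ip1_diff_left sum_subtractf)

lemma ipH_lincomb_left:
  assumes F: "finite F" and v: "\<And>k. k \<in> F \<Longrightarrow> inH p T (v k)" and y: "inH p T y"
  shows "ipH p T (\<lambda>j t. \<Sum>k\<in>F. c k * v k j t) y = (\<Sum>k\<in>F. c k * ipH p T (v k) y)"
proof -
  have "ipH p T (\<lambda>j t. \<Sum>k\<in>F. c k * v k j t) y = (\<Sum>j<p. \<Sum>k\<in>F. c k * ip1 T (v k j) (y j))"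
    unfolding ipH_def using v y by (intro sum.cong refl ip1_lincomb_left[OF F]) (auto simp: inH_def)
  also have "\<dots> = (\<Sum>k\<in>F. c k * ipH p T (v k) y)"
    unfolding ipH_def by (simp add: sum_distrib_left sum.swap[of _ F])
  finally show ?thesis .
qed

lemma ipH_self_nonneg: "0 \<le> ipH p T x x"
  unfolding ipH_def by (intro sum_nonneg ip1_self_nonneg)

lemma ipH_orthonormal_lincomb:
  assumes F: "finite F" and v: "\<And>k. k \<in> F \<Longrightarrow> inH p T (v k)"
    and orthonormal: "\<And>k l. k \<in> F \<Longrightarrow> l \<in> F \<Longrightarrow> ipH p T (v k) (v l) = (if k = l then 1 else 0)"
    and l: "l \<in> F"
  shows "ipH p T (\<lambda>j t. \<Sum>k\<in>F. c k * v k j t) (v l) = c l"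
proof -
  have "ipH p T (\<lambda>j t. \<Sum>k\<in>F. c k * v k j t) (v l) = (\<Sum>k\<in>F. c k * ipH p T (v k) (v l))"
    by (rule ipH_lincomb_left[OF F v v[OF l]])
  also have "\<dots> = (\<Sum>k\<in>F. if k = l then c k else 0)"
    using l by (intro sum.cong) (simp_all add: orthonormal)
  also have "\<dots> = c l" using F l by simp
  finally show ?thesis .
qed

lemma Bessel_inequality_H:
  assumes I: "finite I" and v: "\<And>i. i \<in> I \<Longrightarrow> inH p T (v i)"
    and orthonormal: "\<And>i i'. i \<in> I \<Longrightarrow> i' \<in> I \<Longrightarrow> ipH p T (v i) (v i') = (if i = i' then 1 else 0)"
    and y: "inH p T y"
  shows "(\<Sum>i\<in>I. (ipH p T y (v i))\<^sup>2) \<le> ipH p T y y"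
proof -
  define d where "d i = ipH p T y (v i)" for i
  define proj where "proj = (\<lambda>j t. \<Sum>i\<in>I. d i * v i j t)"
  define z where "z = (\<lambda>j t. y j t - proj j t)"
  have proj: "inH p T proj" unfolding proj_def by (rule inH_lincomb[OF I v])
  have z: "inH p T z" unfolding z_def by (rule inH_diff[OF y proj])
  have z_orth: "ipH p T (v i) z = 0" if i: "i \<in> I" for i
  proof -
    have "ipH p T z (v i) = d i - ipH p T proj (v i)"
      unfolding z_def d_def by (rule ipH_diff_left[OF y proj v[OF i]])
    also have "ipH p T proj (v i) = d i"
      unfolding proj_def by (rule ipH_orthonormal_lincomb[OF I v orthonormal i])
    finally show ?thesis by (simp add: ipH_commute)
  qed
  have proj_y: "ipH p T proj y = (\<Sum>i\<in>I. d i * d i)"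
  proof -
    have "ipH p T proj y = (\<Sum>i\<in>I. d i * ipH p T (v i) y)"
      unfolding proj_def by (rule ipH_lincomb_left[OF I v y])
    then show ?thesis by (simp add: d_def ipH_commute[of p T y])
  qed
  have "0 \<le> ipH p T z z" by (rule ipH_self_nonneg)
  also have "\<dots> = ipH p T y z - ipH p T proj z"
    by (rule ipH_diff_left[OF y proj z, folded z_def])
  also have "ipH p T proj z = 0"
    unfolding proj_def by (simp add: ipH_lincomb_left[OF I v z] z_orth)
  also have "ipH p T y z = ipH p T y y - (\<Sum>i\<in>I. d i * d i)"
  proof -
    have "ipH p T y z = ipH p T y y - ipH p T proj y"
      unfolding ipH_commute[of p T y z] by (rule ipH_diff_left[OF y proj y, folded z_def])
    then show ?thesis by (simp only: proj_y)
  qed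
  finally show ?thesis unfolding d_def by (simp add: power2_eq_square)
qed

lemma ipH_sum_squares_eq_if_same_span:
  assumes F: "finite F" and E: "finite E"
    and v: "\<And>k. k \<in> F \<Longrightarrow> inH p T (v k)" and w: "\<And>e. e \<in> E \<Longrightarrow> inH p T (w e)"
    and orthonormal: "\<And>k l. k \<in> F \<Longrightarrow> l \<in> F \<Longrightarrow> ipH p T (v k) (v l) = (if k = l then 1 else 0)"
    and w_expansion: "\<And>e j t. e \<in> E \<Longrightarrow> j < p \<Longrightarrow> t \<in> T \<Longrightarrow>
      w e j t = (\<Sum>k\<in>F. ipH p T (w e) (v k) * v k j t)"
    and v_expansion: "\<And>k j t. k \<in> F \<Longrightarrow> j < p \<Longrightarrow> t \<in> T \<Longrightarrow>
      v k j t = (\<Sum>e\<in>E. ipH p T (v k) (w e) * w e j t)"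
    and y: "inH p T y"
  shows "(\<Sum>e\<in>E. (ipH p T y (w e))\<^sup>2) = (\<Sum>k\<in>F. (ipH p T y (v k))\<^sup>2)"
proof -
  define A where "A e k = ipH p T (w e) (v k)" for e k
  define Y where "Y k = ipH p T y (v k)" for k
  have coeff_w: "ipH p T y (w e) = (\<Sum>k\<in>F. A e k * Y k)" if e: "e \<in> E" for e
  proof -
    have "ipH p T (w e) y = ipH p T (\<lambda>j t. \<Sum>k\<in>F. A e k * v k j t) y"
      unfolding A_def by (rule ipH_cong) (simp_all add: w_expansion e)
    also have "\<dots> = (\<Sum>k\<in>F. A e k * ipH p T (v k) y)"
      by (rule ipH_lincomb_left[OF F v y])
    finally show ?thesis unfolding Y_def by (simp add: ipH_commute)
  qed
  have A_orthonormal: "(\<Sum>e\<in>E. A e k * A e l) = (if k = l then 1 else 0)" if k: "k \<in> F" and l: "l \<in> F" for k l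
  proof -
    have "(if k = l then 1 else 0) = ipH p T (v k) (v l)" by (simp add: orthonormal k l)
    also have "\<dots> = ipH p T (\<lambda>j t. \<Sum>e\<in>E. A e k * w e j t) (v l)"
      unfolding A_def by (rule ipH_cong) (simp_all add: v_expansion k ipH_commute[of p T "v k"])
    also have "\<dots> = (\<Sum>e\<in>E. A e k * A e l)"
      unfolding A_def by (rule ipH_lincomb_left[OF E w v[OF l]])
    finally show ?thesis by simp
  qed
  have "(\<Sum>e\<in>E. (ipH p T y (w e))\<^sup>2) = (\<Sum>e\<in>E. \<Sum>k\<in>F. \<Sum>l\<in>F. Y k * Y l * (A e k * A e l))"
    by (intro sum.cong refl) (simp add: coeff_w power2_eq_square sum_product mult_ac)
  also have "\<dots> = (\<Sum>k\<in>F. \<Sum>l\<in>F. Y k * Y l * (\<Sum>e\<in>E. A e k * A e l))"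
    by (simp add: sum.swap[of _ E] sum_distrib_left)
  also have "\<dots> = (\<Sum>k\<in>F. \<Sum>l\<in>F. if l = k then Y k * Y l else 0)"
    by (intro sum.cong refl) (auto simp: A_orthonormal)
  also have "\<dots> = (\<Sum>k\<in>F. (Y k)\<^sup>2)"
    using F by (simp add: power2_eq_square)
  finally show ?thesis unfolding Y_def .
qed

section \<open>Eigenvector expansions\<close>

definition eigenvectorH :: "nat \<Rightarrow> real set \<Rightarrow> (nat \<Rightarrow> nat \<Rightarrow> real \<Rightarrow> real \<Rightarrow> real) \<Rightarrow> real \<Rightarrow> (nat \<Rightarrow> real \<Rightarrow> real) \<Rightarrow> bool" where
  "eigenvectorH p T K \<nu> u \<longleftrightarrow> inH p T u \<and> (\<forall>i<p. \<forall>s\<in>T. covop p T K u i s = \<nu> * u i s)"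

definition covop_integrable :: "nat \<Rightarrow> real set \<Rightarrow> (nat \<Rightarrow> nat \<Rightarrow> real \<Rightarrow> real \<Rightarrow> real) \<Rightarrow> bool" where
  "covop_integrable p T K \<longleftrightarrow>
     (\<forall>x. inH p T x \<longrightarrow> (\<forall>i<p. \<forall>j<p. \<forall>s\<in>T. integrable (lebesgue_on T) (\<lambda>t. K i j s t * x j t)))"

definition covop_selfadjoint :: "nat \<Rightarrow> real set \<Rightarrow> (nat \<Rightarrow> nat \<Rightarrow> real \<Rightarrow> real \<Rightarrow> real) \<Rightarrow> bool" where
  "covop_selfadjoint p T K \<longleftrightarrow>
     (\<forall>x y. inH p T x \<longrightarrow> inH p T y \<longrightarrow> ipH p T (covop p T K x) y = ipH p T x (covop p T K y))"

lemma eigensysH_eigenvector: "eigensysH p T K \<pi>s \<psi> \<Longrightarrow> eigenvectorH p T K (\<pi>s k) (\<psi> k)"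
  unfolding eigensysH_def eigenvectorH_def by blast

lemma covop_diff_lincomb:
  assumes K: "covop_integrable p T K" and F: "finite F"
    and v: "\<And>k. k \<in> F \<Longrightarrow> inH p T (v k)" and u: "inH p T u" and i: "i < p" and s: "s \<in> T"
  shows "covop p T K (\<lambda>j t. u j t - (\<Sum>k\<in>F. c k * v k j t)) i s
       = covop p T K u i s - (\<Sum>k\<in>F. c k * covop p T K (v k) i s)"
proof -
  have "(\<integral>t. K i j s t * (u j t - (\<Sum>k\<in>F. c k * v k j t)) \<partial>lebesgue_on T)
      = (\<integral>t. K i j s t * u j t \<partial>lebesgue_on T) - (\<Sum>k\<in>F. c k * (\<integral>t. K i j s t * v k j t \<partial>lebesgue_on T))"
    if j: "j < p" for j
  proof -
    have integrable: "integrable (lebesgue_on T) (\<lambda>t. K i j s t * x j t)" if "inH p T x" for x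
      using K that i j s unfolding covop_integrable_def by blast
    have "(\<integral>t. K i j s t * (u j t - (\<Sum>k\<in>F. c k * v k j t)) \<partial>lebesgue_on T)
        = (\<integral>t. K i j s t * u j t - (\<Sum>k\<in>F. c k * (K i j s t * v k j t)) \<partial>lebesgue_on T)"
      by (simp add: right_diff_distrib sum_distrib_left mult.left_commute)
    also have "\<dots> = (\<integral>t. K i j s t * u j t \<partial>lebesgue_on T) - (\<Sum>k\<in>F. c k * (\<integral>t. K i j s t * v k j t \<partial>lebesgue_on T))"
      using integrable[OF u] integrable[OF v] by simp
    finally show ?thesis .
  qed
  then show ?thesis
    unfolding covop_def by (simp add: sum_subtractf sum_distrib_left sum.swap[of _ F])
qed

lemma eigenvectorH_orthogonal:
  assumes K: "covop_selfadjoint p T K"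
    and u: "eigenvectorH p T K \<nu> u" and w: "eigenvectorH p T K \<mu> w" and ne: "\<mu> \<noteq> \<nu>"
  shows "ipH p T u w = 0"
proof -
  have "\<nu> * ipH p T u w = ipH p T (covop p T K u) w"
    using u by (simp add: eigenvectorH_def ipH_cmult_left[symmetric] cong: ipH_cong)
  also have "\<dots> = ipH p T u (covop p T K w)"
    using K u w unfolding covop_selfadjoint_def eigenvectorH_def by blast
  also have "\<dots> = \<mu> * ipH p T u w"
    using w by (simp add: eigenvectorH_def ipH_cmult_right[symmetric] cong: ipH_cong)
  finally show ?thesis using ne by simp
qed

lemma eigensysH_eigenvector_expansion:
  assumes eig: "eigensysH p T K \<pi>s \<psi>"
    and K_int: "covop_integrable p T K" and K_sa: "covop_selfadjoint p T K"
    and u: "eigenvectorH p T K \<nu> u" and "\<nu> \<noteq> 0"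
    and F: "finite F" and F_sup: "{k. \<pi>s k = \<nu>} \<subseteq> F"
    and i: "i < p" and s: "s \<in> T"
  shows "u i s = (\<Sum>k\<in>F. ipH p T u (\<psi> k) * \<psi> k i s)"
proof -
  define c where "c k = ipH p T u (\<psi> k)" for k
  define r where "r = (\<lambda>j t. u j t - (\<Sum>k\<in>F. c k * \<psi> k j t))"
  have \<psi>: "inH p T (\<psi> k)" for k using eig unfolding eigensysH_def by blast
  have u_in: "inH p T u" using u unfolding eigenvectorH_def by blast
  have c_zero: "c k = 0" if "\<pi>s k \<noteq> \<nu>" for k
    unfolding c_def using that
    by (intro eigenvectorH_orthogonal[OF K_sa u eigensysH_eigenvector[OF eig]])
  have r: "inH p T r" unfolding r_def by (intro inH_diff u_in inH_lincomb F \<psi>)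
  have "ipH p T r (\<psi> l) = 0" for l
  proof -
    have "ipH p T r (\<psi> l) = c l - (\<Sum>k\<in>F. c k * ipH p T (\<psi> k) (\<psi> l))"
      unfolding r_def c_def by (simp add: ipH_diff_left[OF u_in inH_lincomb[OF F \<psi>] \<psi>] ipH_lincomb_left[OF F \<psi> \<psi>])
    also have "(\<Sum>k\<in>F. c k * ipH p T (\<psi> k) (\<psi> l)) = (\<Sum>k\<in>F. if k = l then c k else 0)"
      using eig unfolding eigensysH_def by (intro sum.cong) simp_all
    finally show ?thesis using F F_sup c_zero by (cases "l \<in> F") auto
  qed
  then have covop_r: "covop p T K r i s = 0"
    using eig r i s unfolding eigensysH_def by blast
  have "covop p T K r i s = covop p T K u i s - (\<Sum>k\<in>F. c k * covop p T K (\<psi> k) i s)"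
    unfolding r_def by (rule covop_diff_lincomb[OF K_int F \<psi> u_in i s])
  also have "\<dots> = \<nu> * u i s - (\<Sum>k\<in>F. c k * (\<pi>s k * \<psi> k i s))"
    using u eigensysH_eigenvector[OF eig] i s unfolding eigenvectorH_def by simp
  also have "(\<Sum>k\<in>F. c k * (\<pi>s k * \<psi> k i s)) = (\<Sum>k\<in>F. \<nu> * (c k * \<psi> k i s))"
    by (intro sum.cong refl) (metis c_zero mult_zero_left mult.left_commute)
  also have "\<nu> * u i s - (\<Sum>k\<in>F. \<nu> * (c k * \<psi> k i s)) = \<nu> * r i s"
    unfolding r_def by (simp add: sum_distrib_left right_diff_distrib)
  finally have "r i s = 0" using covop_r \<open>\<nu> \<noteq> 0\<close> by simp
  then show ?thesis unfolding r_def c_def by simp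
qed

lemma inH_one: "inH (Suc 0) T x \<longleftrightarrow> L2 T (x 0)"
  unfolding inH_def by simp

lemma ipH_one: "ipH (Suc 0) T x y = ip1 T (x 0) (y 0)"
  unfolding ipH_def by simp

lemma covop_one: "covop (Suc 0) T (\<lambda>_ _. \<kappa>) x i s = intop T \<kappa> (x 0) s"
  unfolding covop_def intop_def by simp

lemma eigensys1_iff_eigensysH_one:
  "eigensys1 T \<kappa> lam xi \<longleftrightarrow> eigensysH (Suc 0) T (\<lambda>_ _. \<kappa>) lam (\<lambda>i _. xi i)"
proof -
  have "(\<forall>x :: nat \<Rightarrow> real \<Rightarrow> real. Q (x 0)) \<longleftrightarrow> (\<forall>f. Q f)" for Q
    by (auto dest: spec[of _ "\<lambda>_. _"])
  from this[of "\<lambda>f. L2 T f \<longrightarrow> (\<forall>k. ip1 T f (xi k) = 0) \<longrightarrow> (\<forall>s\<in>T. intop T \<kappa> f s = 0)"]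
  show ?thesis
    unfolding eigensysH_def eigensys1_def inH_one ipH_one covop_one by simp
qed

section \<open>Integral operators with continuous kernels\<close>

lemma continuous_kernel_bounded:
  assumes "compact T" and "continuous_on (T \<times> T) (\<lambda>(s, t). k s t)"
  obtains B :: real where "\<And>s t. s \<in> T \<Longrightarrow> t \<in> T \<Longrightarrow> \<bar>k s t\<bar> \<le> B"
proof -
  have "bounded ((\<lambda>(s, t). k s t) ` (T \<times> T))"
    using assms by (intro compact_imp_bounded compact_continuous_image compact_Times)
  then obtain B where "\<forall>z\<in>T \<times> T. norm ((\<lambda>(s, t). k s t) z) \<le> B"
    unfolding bounded_iff by blast
  then show ?thesis using that by fastforce
qed

lemma compact_imp_sets_lebesgue: "compact T \<Longrightarrow> T \<in> sets lebesgue"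
  using fmeasurableD[OF lmeasurable_compact] .

lemma continuous_kernel_measurable:
  fixes k :: "real \<Rightarrow> real \<Rightarrow> real"
  assumes T: "T \<in> sets lebesgue" and k: "continuous_on (T \<times> T) (\<lambda>(s, t). k s t)"
  shows "(\<lambda>(s, t). k s t) \<in> borel_measurable (lebesgue_on T \<Otimes>\<^sub>M lebesgue_on T)"
proof -
  have id: "(\<lambda>x. x) \<in> lebesgue_on T \<rightarrow>\<^sub>M (borel :: real measure)"
    using T by (intro continuous_imp_measurable_on_sets_lebesgue continuous_on_id)
  have "(\<lambda>z. (fst z, snd z)) \<in> lebesgue_on T \<Otimes>\<^sub>M lebesgue_on T \<rightarrow>\<^sub>M (borel \<Otimes>\<^sub>M borel :: (real \<times> real) measure)"
    by (intro measurable_Pair measurable_compose[OF measurable_fst id] measurable_compose[OF measurable_snd id])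
  then have "(\<lambda>z. z) \<in> lebesgue_on T \<Otimes>\<^sub>M lebesgue_on T \<rightarrow>\<^sub>M restrict_space borel (T \<times> T)"
    by (intro measurable_restrict_space2) (simp_all add: borel_prod space_pair_measure)
  from measurable_compose[OF this borel_measurable_continuous_on_restrict[OF k]] show ?thesis
    by simp
qed

lemma integrable_continuous_kernel_mult:
  assumes T: "compact T" and k: "continuous_on (T \<times> T) (\<lambda>(s, t). k s t)"
    and s: "s \<in> T" and f: "L2 T f"
  shows "integrable (lebesgue_on T) (\<lambda>t. k s t * f t)"
proof -
  obtain B where B: "\<And>s t. s \<in> T \<Longrightarrow> t \<in> T \<Longrightarrow> \<bar>k s t\<bar> \<le> B"
    using continuous_kernel_bounded[OF T k] by blast
  have "continuous_on T (\<lambda>t. (\<lambda>(s, t). k s t) (s, t))"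
    using s by (intro continuous_on_compose2[OF k]) (auto intro!: continuous_intros)
  then have "(\<lambda>t. k s t) \<in> borel_measurable (lebesgue_on T)"
    using compact_imp_sets_lebesgue[OF T] by (intro continuous_imp_measurable_on_sets_lebesgue) simp_all
  moreover have "f \<in> borel_measurable (lebesgue_on T)" using f unfolding L2_def by blast
  ultimately have measurable: "(\<lambda>t. k s t * f t) \<in> borel_measurable (lebesgue_on T)"
    by (rule borel_measurable_times)
  show ?thesis
  proof (rule Bochner_Integration.integrable_bound[OF _ measurable])
    show "integrable (lebesgue_on T) (\<lambda>t. B * \<bar>f t\<bar>)"
      using T f by (intro integrable_mult_right integrable_abs L2_imp_integrable lmeasurable_compact)
    show "AE t in lebesgue_on T. norm (k s t * f t) \<le> norm (B * \<bar>f t\<bar>)"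
    proof (rule AE_I2)
      fix t assume "t \<in> space (lebesgue_on T)"
      then have "\<bar>k s t\<bar> \<le> B" using B s by simp
      then show "norm (k s t * f t) \<le> norm (B * \<bar>f t\<bar>)"
        by (simp add: abs_mult mult_right_mono)
    qed
  qed
qed

lemma ip1_intop_transpose:
  assumes T: "compact T" and k: "continuous_on (T \<times> T) (\<lambda>(s, t). k s t)"
    and f: "L2 T f" and g: "L2 T g"
  shows "integrable (lebesgue_on T) (\<lambda>s. intop T k f s * g s)"
    and "ip1 T (intop T k f) g = ip1 T f (intop T (\<lambda>s t. k t s) g)"
proof -
  let ?M = "lebesgue_on T"
  interpret M: finite_measure ?M
    using T by (intro finite_measure_lebesgue_on lmeasurable_compact)
  interpret MM: pair_sigma_finite ?M ?M
    unfolding pair_sigma_finite_def using M.sigma_finite_measure_axioms by simp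
  obtain B where B: "\<And>s t. s \<in> T \<Longrightarrow> t \<in> T \<Longrightarrow> \<bar>k s t\<bar> \<le> B"
    using continuous_kernel_bounded[OF T k] by blast
  have fi: "integrable ?M f" and gi: "integrable ?M g"
    using T f g by (simp_all add: L2_imp_integrable lmeasurable_compact)
  have fm: "(\<lambda>z. f (snd z)) \<in> borel_measurable (?M \<Otimes>\<^sub>M ?M)"
    using f unfolding L2_def by (intro measurable_compose[OF measurable_snd]) blast
  have gm: "(\<lambda>z. g (fst z)) \<in> borel_measurable (?M \<Otimes>\<^sub>M ?M)"
    using g unfolding L2_def by (intro measurable_compose[OF measurable_fst]) blast
  define G where "G = (\<lambda>z. \<bar>g (fst z)\<bar> * \<bar>f (snd z)\<bar>)"
  have G: "integrable (?M \<Otimes>\<^sub>M ?M) G"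
  proof (rule MM.Fubini_integrable)
    show "G \<in> borel_measurable (?M \<Otimes>\<^sub>M ?M)"
      unfolding G_def by (intro borel_measurable_times borel_measurable_abs fm gm)
    have "integrable ?M (\<lambda>x. \<bar>g x\<bar> * (\<integral>y. \<bar>f y\<bar> \<partial>?M))"
      by (intro integrable_mult_left integrable_abs gi)
    then show "integrable ?M (\<lambda>x. \<integral>y. norm (G (x, y)) \<partial>?M)"
      unfolding G_def by (simp add: abs_mult)
    show "AE x in ?M. integrable ?M (\<lambda>y. G (x, y))"
      unfolding G_def by (intro AE_I2) (simp add: integrable_abs fi)
  qed
  define H where "H = (\<lambda>s t. k s t * f t * g s)"
  have H: "integrable (?M \<Otimes>\<^sub>M ?M) (case_prod H)"
  proof (rule Bochner_Integration.integrable_bound)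
    show "integrable (?M \<Otimes>\<^sub>M ?M) (\<lambda>z. B * G z)" by (intro integrable_mult_right G)
    have "(\<lambda>(s, t). k s t) \<in> borel_measurable (?M \<Otimes>\<^sub>M ?M)"
      by (rule continuous_kernel_measurable[OF compact_imp_sets_lebesgue[OF T] k])
    then show "case_prod H \<in> borel_measurable (?M \<Otimes>\<^sub>M ?M)"
      unfolding H_def case_prod_beta' by (intro borel_measurable_times fm gm)
    show "AE z in ?M \<Otimes>\<^sub>M ?M. norm (case_prod H z) \<le> norm (B * G z)"
    proof (rule AE_I2)
      fix z assume "z \<in> space (?M \<Otimes>\<^sub>M ?M)"
      then obtain s t where z: "z = (s, t)" and "s \<in> T" "t \<in> T"
        by (auto simp: space_pair_measure)
      then have "\<bar>k s t\<bar> \<le> B" by (rule_tac B)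
      then have "\<bar>k s t\<bar> * (\<bar>f t\<bar> * \<bar>g s\<bar>) \<le> B * (\<bar>f t\<bar> * \<bar>g s\<bar>)"
        by (rule mult_right_mono) simp
      then show "norm (case_prod H z) \<le> norm (B * G z)"
        using \<open>\<bar>k s t\<bar> \<le> B\<close> unfolding z H_def G_def by (simp add: abs_mult mult_ac)
    qed
  qed
  have inner_fst: "(\<lambda>s. \<integral>t. H s t \<partial>?M) = (\<lambda>s. intop T k f s * g s)"
    unfolding H_def intop_def by simp
  have inner_snd: "(\<lambda>t. \<integral>s. H s t \<partial>?M) = (\<lambda>t. f t * intop T (\<lambda>s t. k t s) g t)"
    unfolding H_def intop_def by (simp add: mult_ac)
  show "integrable ?M (\<lambda>s. intop T k f s * g s)"
    using MM.integrable_fst[OF H] unfolding inner_fst .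
  show "ip1 T (intop T k f) g = ip1 T f (intop T (\<lambda>s t. k t s) g)"
    using MM.Fubini_integral[OF H] unfolding ip1_def inner_fst inner_snd by simp
qed

lemma L2_if_continuous_on:
  assumes T: "compact T" and f: "continuous_on T f"
  shows "L2 T f"
  unfolding L2_def
proof
  interpret finite_measure "lebesgue_on T"
    using T by (intro finite_measure_lebesgue_on lmeasurable_compact)
  have f2: "continuous_on T (\<lambda>t. (f t)\<^sup>2)" by (intro continuous_intros f)
  then obtain C where C: "\<forall>t\<in>T. norm ((f t)\<^sup>2) \<le> C"
    using compact_imp_bounded[OF compact_continuous_image[OF f2 T]] unfolding bounded_iff by auto
  show "f \<in> borel_measurable (lebesgue_on T)"
    using f compact_imp_sets_lebesgue[OF T] by (rule continuous_imp_measurable_on_sets_lebesgue)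
  then show "integrable (lebesgue_on T) (\<lambda>t. (f t)\<^sup>2)"
    using C by (intro integrable_const_bound[where B = C]) auto
qed

lemma covop_integrable_if_continuous:
  assumes "compact T" and "\<And>i j. i < p \<Longrightarrow> j < p \<Longrightarrow> continuous_on (T \<times> T) (\<lambda>(s, t). K i j s t)"
  shows "covop_integrable p T K"
  unfolding covop_integrable_def inH_def using assms by (auto intro!: integrable_continuous_kernel_mult)

lemma ip1_sum_left:
  assumes "\<And>j. j \<in> J \<Longrightarrow> integrable (lebesgue_on T) (\<lambda>s. f j s * g s)"
  shows "ip1 T (\<lambda>s. \<Sum>j\<in>J. f j s) g = (\<Sum>j\<in>J. ip1 T (f j) g)"
  unfolding ip1_def sum_distrib_right using assms by (rule Bochner_Integration.integral_sum)

lemma covop_selfadjoint_if_continuous_symmetric: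
  assumes T: "compact T"
    and cont: "\<And>i j. i < p \<Longrightarrow> j < p \<Longrightarrow> continuous_on (T \<times> T) (\<lambda>(s, t). K i j s t)"
    and sym: "\<And>i j s t. i < p \<Longrightarrow> j < p \<Longrightarrow> s \<in> T \<Longrightarrow> t \<in> T \<Longrightarrow> K i j s t = K j i t s"
  shows "covop_selfadjoint p T K"
  unfolding covop_selfadjoint_def
proof (intro allI impI)
  fix x y assume x: "inH p T x" and y: "inH p T y"
  have covop_eq: "covop p T K z i = (\<lambda>s. \<Sum>j<p. intop T (K i j) (z j) s)" for z i
    unfolding covop_def intop_def ..
  have swap: "ip1 T (intop T (K i j) (x j)) (y i) = ip1 T (x j) (intop T (K j i) (y i))"
    if "i < p" "j < p" for i j
  proof -
    have "ip1 T (intop T (K i j) (x j)) (y i) = ip1 T (x j) (intop T (\<lambda>s t. K i j t s) (y i))"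
      using x y that by (intro ip1_intop_transpose(2)[OF T cont]) (simp_all add: inH_def)
    also have "\<dots> = ip1 T (x j) (intop T (K j i) (y i))"
      unfolding intop_def using that sym by (intro ip1_cong Bochner_Integration.integral_cong) auto
    finally show ?thesis .
  qed
  have "ipH p T (covop p T K x) y = (\<Sum>i<p. \<Sum>j<p. ip1 T (intop T (K i j) (x j)) (y i))"
    unfolding ipH_def covop_eq using x y
    by (intro sum.cong refl ip1_sum_left) (auto simp: inH_def intro!: ip1_intop_transpose(1)[OF T cont])
  also have "\<dots> = (\<Sum>i<p. \<Sum>j<p. ip1 T (x j) (intop T (K j i) (y i)))"
    by (intro sum.cong refl swap) auto
  also have "\<dots> = (\<Sum>j<p. \<Sum>i<p. ip1 T (intop T (K j i) (y i)) (x j))"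
    by (subst sum.swap) (simp add: ip1_commute[where f = "x j" for j])
  also have "\<dots> = ipH p T x (covop p T K y)"
    unfolding ipH_def covop_eq
  proof (intro sum.cong refl)
    fix j assume "j \<in> {..<p}"
    then have "(\<Sum>i<p. ip1 T (intop T (K j i) (y i)) (x j)) = ip1 T (\<lambda>s. \<Sum>i<p. intop T (K j i) (y i) s) (x j)"
      using x y by (intro ip1_sum_left[symmetric]) (auto simp: inH_def intro!: ip1_intop_transpose(1)[OF T cont])
    then show "(\<Sum>i<p. ip1 T (intop T (K j i) (y i)) (x j)) = ip1 T (x j) (\<lambda>s. \<Sum>i<p. intop T (K j i) (y i) s)"
      by (simp add: ip1_commute)
  qed
  finally show "ipH p T (covop p T K x) y = ipH p T x (covop p T K y)" .
qed

section \<open>Mean-square continuous processes\<close>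

lemma (in prob_space) square_expectation_le:
  assumes "square_integrable M f"
  shows "(expectation f)\<^sup>2 \<le> expectation (\<lambda>x. (f x)\<^sup>2)"
proof -
  have "integrable M f" and "integrable M (\<lambda>x. (f x)\<^sup>2)"
    using assms integrable_if_square_integrable unfolding square_integrable_def by blast+
  then show ?thesis using variance_positive[of f] variance_eq[of f] by linarith
qed

lemma (in prob_space) variance_le_second_moment:
  assumes "square_integrable M f"
  shows "variance f \<le> expectation (\<lambda>x. (f x)\<^sup>2)"
proof -
  have "integrable M f" and "integrable M (\<lambda>x. (f x)\<^sup>2)"
    using assms integrable_if_square_integrable unfolding square_integrable_def by blast+
  then show ?thesis using variance_eq[of f] by simp
qed

lemma integral_square_le_diff:
  assumes f: "square_integrable M f" and g: "square_integrable M g"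
  shows "(\<integral>x. (f x)\<^sup>2 \<partial>M) \<le> 2 * (\<integral>x. (g x)\<^sup>2 \<partial>M) + 2 * (\<integral>x. (f x - g x)\<^sup>2 \<partial>M)"
proof -
  have fg: "square_integrable M (\<lambda>x. f x - g x)" using f g by (rule square_integrable_diff)
  have "(\<integral>x. (f x)\<^sup>2 \<partial>M) \<le> (\<integral>x. 2 * (g x)\<^sup>2 + 2 * (f x - g x)\<^sup>2 \<partial>M)"
  proof (rule integral_mono)
    fix x
    have "0 \<le> (f x - 2 * g x)\<^sup>2" by simp
    then show "(f x)\<^sup>2 \<le> 2 * (g x)\<^sup>2 + 2 * (f x - g x)\<^sup>2"
      by (simp add: power2_eq_square algebra_simps)
  qed (use f g fg in \<open>simp_all add: square_integrable_def\<close>)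
  also have "\<dots> = 2 * (\<integral>x. (g x)\<^sup>2 \<partial>M) + 2 * (\<integral>x. (f x - g x)\<^sup>2 \<partial>M)"
    using g fg unfolding square_integrable_def by simp
  finally show ?thesis .
qed

lemma continuous_at_within_Times_fst:
  assumes "continuous (at x within S) f" and "y \<in> T"
  shows "continuous (at (x, y) within S \<times> T) (\<lambda>z. f (fst z))"
proof (rule continuous_within_compose2)
  show "continuous (at (x, y) within S \<times> T) fst" by (intro continuous_intros)
  show "continuous (at (fst (x, y)) within fst ` (S \<times> T)) f" using assms by auto
qed

lemma continuous_at_within_Times_snd:
  assumes "continuous (at y within T) f" and "x \<in> S"
  shows "continuous (at (x, y) within S \<times> T) (\<lambda>z. f (snd z))"
proof (rule continuous_within_compose2)
  show "continuous (at (x, y) within S \<times> T) snd" by (intro continuous_intros)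
  show "continuous (at (snd (x, y)) within snd ` (S \<times> T)) f" using assms by auto
qed

lemma continuous_on_integral_mult_if_mean_square_continuous:
  fixes U V :: "real \<Rightarrow> 'a \<Rightarrow> real"
  assumes U: "\<And>s. s \<in> S \<Longrightarrow> square_integrable M (U s)"
    and V: "\<And>t. t \<in> T \<Longrightarrow> square_integrable M (V t)"
    and U_cont: "\<And>s0. s0 \<in> S \<Longrightarrow> ((\<lambda>s. \<integral>x. (U s x - U s0 x)\<^sup>2 \<partial>M) \<longlongrightarrow> 0) (at s0 within S)"
    and V_cont: "\<And>t0. t0 \<in> T \<Longrightarrow> ((\<lambda>t. \<integral>x. (V t x - V t0 x)\<^sup>2 \<partial>M) \<longlongrightarrow> 0) (at t0 within T)"
  shows "continuous_on (S \<times> T) (\<lambda>(s, t). \<integral>x. U s x * V t x \<partial>M)"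
  unfolding continuous_on_def
proof (intro ballI)
  fix z0 assume "z0 \<in> S \<times> T"
  then obtain s0 t0 where z0: "z0 = (s0, t0)" and s0: "s0 \<in> S" and t0: "t0 \<in> T" by blast
  let ?G = "\<lambda>(s, t). \<integral>x. U s x * V t x \<partial>M"
  define DU where "DU s = (\<integral>x. (U s x - U s0 x)\<^sup>2 \<partial>M)" for s
  define DV where "DV t = (\<integral>x. (V t x - V t0 x)\<^sup>2 \<partial>M)" for t
  define A where "A = (\<integral>x. (U s0 x)\<^sup>2 \<partial>M)"
  define B where "B = (\<integral>x. (V t0 x)\<^sup>2 \<partial>M)"
  define bound where "bound z = sqrt (DU (fst z) * (2 * B + 2 * DV (snd z))) + sqrt (A * DV (snd z))" for z
  have bound_le: "\<bar>?G z - ?G z0\<bar> \<le> bound z" if "z \<in> S \<times> T" for z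
  proof -
    obtain s t where z: "z = (s, t)" and s: "s \<in> S" and t: "t \<in> T" using \<open>z \<in> S \<times> T\<close> by blast
    have dU: "square_integrable M (\<lambda>x. U s x - U s0 x)" by (intro square_integrable_diff U s s0)
    have dV: "square_integrable M (\<lambda>x. V t x - V t0 x)" by (intro square_integrable_diff V t t0)
    have "?G z - ?G z0 = (\<integral>x. (U s x - U s0 x) * V t x \<partial>M) + (\<integral>x. U s0 x * (V t x - V t0 x) \<partial>M)"
      using square_integrable_imp_integrable_mult[OF U V] s t s0 t0 unfolding z z0
      by (simp add: left_diff_distrib right_diff_distrib)
    also have "\<bar>\<dots>\<bar> \<le> sqrt (DU s * (\<integral>x. (V t x)\<^sup>2 \<partial>M)) + sqrt (A * DV t)"
      unfolding DU_def DV_def A_def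
      using abs_integral_mult_le[OF dU V[OF t]] abs_integral_mult_le[OF U[OF s0] dV] by linarith
    also have "\<dots> \<le> bound z"
      unfolding z bound_def B_def DV_def using integral_square_le_diff[OF V[OF t] V[OF t0]]
      by (auto intro!: real_sqrt_le_mono mult_left_mono simp: DU_def integral_square_nonneg)
    finally show ?thesis .
  qed
  have "continuous (at z0 within S \<times> T) (\<lambda>z. DU (fst z))"
    unfolding z0 using U_cont[OF s0]
    by (intro continuous_at_within_Times_fst[OF _ t0]) (simp add: continuous_within DU_def)
  then have DU_lim: "((\<lambda>z. DU (fst z)) \<longlongrightarrow> 0) (at z0 within S \<times> T)"
    unfolding continuous_within z0 by (simp add: DU_def)
  have "continuous (at z0 within S \<times> T) (\<lambda>z. DV (snd z))"
    unfolding z0 using V_cont[OF t0]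
    by (intro continuous_at_within_Times_snd[OF _ s0]) (simp add: continuous_within DV_def)
  then have DV_lim: "((\<lambda>z. DV (snd z)) \<longlongrightarrow> 0) (at z0 within S \<times> T)"
    unfolding continuous_within z0 by (simp add: DV_def)
  have "(bound \<longlongrightarrow> 0) (at z0 within S \<times> T)"
    unfolding bound_def using tendsto_add[OF tendsto_real_sqrt[OF tendsto_mult[OF DU_lim tendsto_add[OF tendsto_const tendsto_mult[OF tendsto_const DV_lim]]]]
      tendsto_real_sqrt[OF tendsto_mult[OF tendsto_const DV_lim]]] by simp
  moreover have "\<forall>\<^sub>F z in at z0 within S \<times> T. norm (?G z - ?G z0) \<le> bound z"
    unfolding eventually_at_filter by (intro always_eventually allI impI) (simp only: real_norm_def bound_le)
  ultimately have "((\<lambda>z. ?G z - ?G z0) \<longlongrightarrow> 0) (at z0 within S \<times> T)"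
    by (rule Lim_null_comparison[rotated])
  then show "(?G \<longlongrightarrow> ?G z0) (at z0 within S \<times> T)"
    by (rule LIM_zero_cancel)
qed

lemma L2_cont_process_square_integrable:
  assumes "L2_cont_process P p T X" and "j < p" and "t \<in> T"
  shows "square_integrable P (\<lambda>w. X w j t)"
  using assms unfolding L2_cont_process_def square_integrable_def by blast

lemma L2_cont_process_increment:
  assumes X: "L2_cont_process P p T X" and j: "j < p" and s: "s \<in> T" and t: "t \<in> T"
  defines "Z \<equiv> \<lambda>w. X w j s - X w j t"
  shows "square_integrable P Z"
    and "prob_space.expectation P Z = mean_fun P X j s - mean_fun P X j t"
    and "(X w j s - mean_fun P X j s) - (X w j t - mean_fun P X j t) = Z w - prob_space.expectation P Z"
proof -
  interpret prob_space P using X unfolding L2_cont_process_def by blast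
  have Xs: "square_integrable P (\<lambda>w. X w j s)" and Xt: "square_integrable P (\<lambda>w. X w j t)"
    using L2_cont_process_square_integrable[OF X j] s t by blast+
  show "square_integrable P Z" unfolding Z_def using Xs Xt by (rule square_integrable_diff)
  show E: "expectation Z = mean_fun P X j s - mean_fun P X j t"
    unfolding Z_def mean_fun_def using Xs Xt by (simp add: integrable_if_square_integrable)
  show "(X w j s - mean_fun P X j s) - (X w j t - mean_fun P X j t) = Z w - expectation Z"
    using E unfolding Z_def by (simp add: algebra_simps)
qed

lemma L2_cont_process_mean_continuous:
  assumes X: "L2_cont_process P p T X" and j: "j < p"
  shows "continuous_on T (mean_fun P X j)"
  unfolding continuous_on_def
proof
  fix t assume t: "t \<in> T"
  interpret prob_space P using X unfolding L2_cont_process_def by blast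
  define D where "D s = (\<integral>w. (X w j s - X w j t)\<^sup>2 \<partial>P)" for s
  have "norm (mean_fun P X j s - mean_fun P X j t) \<le> sqrt (D s)" if s: "s \<in> T" for s
    using square_expectation_le[OF L2_cont_process_increment(1)[OF X j s t]] real_sqrt_le_mono
    unfolding L2_cont_process_increment(2)[OF X j s t] D_def by fastforce
  then have "\<forall>\<^sub>F s in at t within T. norm (mean_fun P X j s - mean_fun P X j t) \<le> sqrt (D s)"
    by (auto simp: eventually_at_filter intro!: always_eventually)
  moreover have "((\<lambda>s. sqrt (D s)) \<longlongrightarrow> 0) (at t within T)"
    using tendsto_real_sqrt[of D 0] X j t unfolding L2_cont_process_def D_def by simp
  ultimately have "((\<lambda>s. mean_fun P X j s - mean_fun P X j t) \<longlongrightarrow> 0) (at t within T)"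
    by (rule Lim_null_comparison)
  then show "(mean_fun P X j \<longlongrightarrow> mean_fun P X j t) (at t within T)"
    by (rule LIM_zero_cancel)
qed

lemma cov_kernel_swap: "cov_kernel P X i j s t = cov_kernel P X j i t s"
  unfolding cov_kernel_def by (simp only: mult.commute)

lemma L2_cont_process_cov_kernel_continuous:
  assumes X: "L2_cont_process P p T X" and i: "i < p" and j: "j < p"
  shows "continuous_on (T \<times> T) (\<lambda>(s, t). cov_kernel P X i j s t)"
proof -
  interpret prob_space P using X unfolding L2_cont_process_def by blast
  define Y where "Y k t w = X w k t - mean_fun P X k t" for k t w
  have Y: "square_integrable P (Y k t)" if "k < p" "t \<in> T" for k t
    unfolding Y_def using L2_cont_process_square_integrable[OF X that]
    by (intro square_integrable_diff square_integrable_const)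
  have Y_cont: "((\<lambda>s. \<integral>w. (Y k s w - Y k t w)\<^sup>2 \<partial>P) \<longlongrightarrow> 0) (at t within T)" if k: "k < p" and t: "t \<in> T" for k t
  proof (rule Lim_null_comparison)
    show "((\<lambda>s. \<integral>w. (X w k s - X w k t)\<^sup>2 \<partial>P) \<longlongrightarrow> 0) (at t within T)"
      using X k t unfolding L2_cont_process_def by blast
    have "norm (\<integral>w. (Y k s w - Y k t w)\<^sup>2 \<partial>P) \<le> (\<integral>w. (X w k s - X w k t)\<^sup>2 \<partial>P)" if s: "s \<in> T" for s
      using variance_le_second_moment[OF L2_cont_process_increment(1)[OF X k s t]] integral_square_nonneg
      unfolding Y_def L2_cont_process_increment(3)[OF X k s t] by simp
    then show "\<forall>\<^sub>F s in at t within T. norm (\<integral>w. (Y k s w - Y k t w)\<^sup>2 \<partial>P) \<le> (\<integral>w. (X w k s - X w k t)\<^sup>2 \<partial>P)"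
      by (auto simp: eventually_at_filter intro!: always_eventually)
  qed
  have "continuous_on (T \<times> T) (\<lambda>(s, t). \<integral>w. Y i s w * Y j t w \<partial>P)"
    using Y Y_cont i j by (intro continuous_on_integral_mult_if_mean_square_continuous)
  then show ?thesis unfolding Y_def cov_kernel_def .
qed

section \<open>Diagonal covariance operators\<close>

lemma finite_downclosed_eq_lessThan:
  fixes S :: "nat set"
  assumes "finite S" and "\<And>x y. x \<in> S \<Longrightarrow> y \<le> x \<Longrightarrow> y \<in> S"
  shows "S = {..<card S}"
proof -
  have "S \<subseteq> {..<card S}"
  proof
    fix x assume "x \<in> S"
    then have "{..x} \<subseteq> S" using assms(2) by blast
    then have "card {..x} \<le> card S" by (rule card_mono[OF assms(1)])
    then show "x \<in> {..<card S}" by simp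
  qed
  then show ?thesis by (intro card_subset_eq) auto
qed

lemma sum_divide_group_by_value:
  fixes h g :: "'a \<Rightarrow> real"
  assumes "finite A" and "finite L" and "g ` A \<subseteq> L"
  shows "(\<Sum>a\<in>A. h a / g a) = (\<Sum>\<nu>\<in>L. (\<Sum>a\<in>{a \<in> A. g a = \<nu>}. h a) / \<nu>)"
proof -
  have "(\<Sum>a\<in>A. h a / g a) = (\<Sum>\<nu>\<in>L. \<Sum>a\<in>{a \<in> A. g a = \<nu>}. h a / g a)"
    using assms by (intro sum.group[symmetric])
  also have "\<dots> = (\<Sum>\<nu>\<in>L. (\<Sum>a\<in>{a \<in> A. g a = \<nu>}. h a) / \<nu>)"
    by (intro sum.cong refl) (simp add: sum_divide_distrib)
  finally show ?thesis .
qed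

definition embH :: "nat \<Rightarrow> (real \<Rightarrow> real) \<Rightarrow> nat \<Rightarrow> real \<Rightarrow> real" where
  "embH j f = (\<lambda>j' t. if j' = j then f t else 0)"

lemma embH_component: "embH j f j' = (if j' = j then f else (\<lambda>t. 0))"
  unfolding embH_def by auto

lemma inH_embH: "j < p \<Longrightarrow> L2 T f \<Longrightarrow> inH p T (embH j f)"
  unfolding inH_def embH_component by (simp add: L2_zero)

lemma ipH_embH_right:
  assumes "j < p" shows "ipH p T x (embH j f) = ip1 T (x j) f"
proof -
  have "ip1 T (x j') (embH j f j') = (if j' = j then ip1 T (x j) f else 0)" for j'
    by (simp add: embH_component)
  then show ?thesis unfolding ipH_def using assms by simp
qed

lemma ipH_embH_embH:
  assumes "j' < p" shows "ipH p T (embH j f) (embH j' g) = (if j = j' then ip1 T f g else 0)"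
  using assms by (cases "j = j'") (simp_all add: ipH_embH_right embH_component)

locale diagonal_covariance =
  fixes p :: nat and T :: "real set" and K :: "nat \<Rightarrow> nat \<Rightarrow> real \<Rightarrow> real \<Rightarrow> real"
    and \<pi>s :: "nat \<Rightarrow> real" and \<psi> :: "nat \<Rightarrow> nat \<Rightarrow> real \<Rightarrow> real"
    and lam :: "nat \<Rightarrow> nat \<Rightarrow> real" and xi :: "nat \<Rightarrow> nat \<Rightarrow> real \<Rightarrow> real"
  assumes integrable: "covop_integrable p T K"
    and selfadjoint: "covop_selfadjoint p T K"
    and diagonal: "\<And>i j s t. i < p \<Longrightarrow> j < p \<Longrightarrow> i \<noteq> j \<Longrightarrow> s \<in> T \<Longrightarrow> t \<in> T \<Longrightarrow> K i j s t = 0"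
    and eig: "eigensysH p T K \<pi>s \<psi>"
    and eig_comp: "\<And>j. j < p \<Longrightarrow> eigensys1 T (K j j) (lam j) (xi j)"
begin

lemma covop_diagonal:
  assumes i: "i < p" and s: "s \<in> T"
  shows "covop p T K x i s = intop T (K i i) (x i) s"
proof -
  have "(\<integral>t. K i j s t * x j t \<partial>lebesgue_on T) = (if j = i then intop T (K i i) (x i) s else 0)"
    if "j < p" for j
  proof (cases "j = i")
    case False
    then have "(\<integral>t. K i j s t * x j t \<partial>lebesgue_on T) = (\<integral>t. 0 \<partial>lebesgue_on T)"
      using diagonal[OF i that] s by (intro Bochner_Integration.integral_cong) auto
    then show ?thesis using False by simp
  qed (simp add: intop_def)
  then show ?thesis
    unfolding covop_def using i by simp
qed

lemma psi: "inH p T (\<psi> k)"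
  and psi_orthonormal: "ipH p T (\<psi> k) (\<psi> l) = (if k = l then 1 else 0)"
  and pi_decseq: "decseq \<pi>s"
  using eig unfolding eigensysH_def by blast+

lemma xi: "j < p \<Longrightarrow> L2 T (xi j i)"
  and xi_orthonormal: "j < p \<Longrightarrow> ip1 T (xi j i) (xi j i') = (if i = i' then 1 else 0)"
  and lam_decseq: "j < p \<Longrightarrow> decseq (lam j)"
  using eig_comp unfolding eigensys1_def by blast+

lemma eigenvectorH_embH_xi:
  assumes j: "j < p"
  shows "eigenvectorH p T K (lam j i) (embH j (xi j i))"
  unfolding eigenvectorH_def
proof (intro conjI allI impI ballI)
  show "inH p T (embH j (xi j i))" by (rule inH_embH[OF j xi[OF j]])
  fix i' s assume "i' < p" "s \<in> T"
  then show "covop p T K (embH j (xi j i)) i' s = lam j i * embH j (xi j i) i' s"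
    using eig_comp[OF j] unfolding covop_diagonal[OF \<open>i' < p\<close> \<open>s \<in> T\<close>] eigensys1_def
    by (simp add: embH_component intop_def)
qed

lemma intop_psi_component:
  assumes j: "j < p" and s: "s \<in> T"
  shows "intop T (K j j) (\<psi> k j) s = \<pi>s k * \<psi> k j s"
proof -
  have "covop p T K (\<psi> k) j s = \<pi>s k * \<psi> k j s"
    using eigensysH_eigenvector[OF eig, of k] j s unfolding eigenvectorH_def by blast
  then show ?thesis by (simp add: covop_diagonal[OF j s])
qed

lemma covop_integrable_component:
  assumes j: "j < p"
  shows "covop_integrable (Suc 0) T (\<lambda>_ _. K j j)"
proof -
  have "integrable (lebesgue_on T) (\<lambda>t. K j j s t * f t)" if f: "L2 T f" and s: "s \<in> T" for f s
  proof -
    have "integrable (lebesgue_on T) (\<lambda>t. K j j s t * embH j f j t)"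
      using integrable inH_embH[OF j f] j s unfolding covop_integrable_def by blast
    then show ?thesis by (simp add: embH_component)
  qed
  then show ?thesis unfolding covop_integrable_def inH_one by simp
qed

lemma covop_selfadjoint_component:
  assumes j: "j < p"
  shows "covop_selfadjoint (Suc 0) T (\<lambda>_ _. K j j)"
  unfolding covop_selfadjoint_def inH_one ipH_one covop_one
proof (intro allI impI)
  fix x y :: "nat \<Rightarrow> real \<Rightarrow> real" assume x: "L2 T (x 0)" and y: "L2 T (y 0)"
  have covop_embH: "ipH p T (covop p T K (embH j (x 0))) (embH j (y 0)) = ip1 T (intop T (K j j) (x 0)) (y 0)"
    for x y :: "nat \<Rightarrow> real \<Rightarrow> real"
    unfolding ipH_embH_right[OF j] using j by (intro ip1_cong) (simp_all add: covop_diagonal embH_def)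
  have "ip1 T (intop T (K j j) (x 0)) (y 0) = ipH p T (covop p T K (embH j (x 0))) (embH j (y 0))"
    by (rule covop_embH[symmetric])
  also have "\<dots> = ipH p T (embH j (x 0)) (covop p T K (embH j (y 0)))"
    using selfadjoint inH_embH[OF j x] inH_embH[OF j y] unfolding covop_selfadjoint_def by blast
  also have "\<dots> = ip1 T (x 0) (intop T (K j j) (y 0))"
    by (simp add: ipH_commute[of p T "embH j (x 0)"] covop_embH ip1_commute)
  finally show "ip1 T (intop T (K j j) (x 0)) (y 0) = ip1 T (x 0) (intop T (K j j) (y 0))" .
qed

lemma psi_component_expansion:
  assumes j: "j < p" and "\<nu> \<noteq> 0" and G: "finite G" and G_sup: "{i. lam j i = \<nu>} \<subseteq> G"
    and k: "\<pi>s k = \<nu>" and s: "s \<in> T"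
  shows "\<psi> k j s = (\<Sum>i\<in>G. ip1 T (\<psi> k j) (xi j i) * xi j i s)"
proof -
  have "eigenvectorH (Suc 0) T (\<lambda>_ _. K j j) \<nu> (\<lambda>_. \<psi> k j)"
    unfolding eigenvectorH_def inH_one covop_one
    using psi[of k] j k intop_psi_component[OF j] by (simp add: inH_def)
  from eigensysH_eigenvector_expansion[OF eig_comp[OF j, unfolded eigensys1_iff_eigensysH_one]
      covop_integrable_component[OF j] covop_selfadjoint_component[OF j] this \<open>\<nu> \<noteq> 0\<close> G G_sup _ s]
  show ?thesis unfolding ipH_one by simp
qed

end

locale diagonal_covariance_gap = diagonal_covariance +
  fixes M :: nat
  assumes gap: "\<pi>s M < \<pi>s (M - 1)" and pos: "0 < \<pi>s (M - 1)"
begin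

abbreviation "threshold \<equiv> \<pi>s (M - 1)"

lemma eigenvalue_ge_threshold_index: "threshold \<le> \<pi>s k \<longleftrightarrow> k < M"
proof
  show "k < M \<Longrightarrow> threshold \<le> \<pi>s k" using pi_decseq by (simp add: decseq_def)
  show "threshold \<le> \<pi>s k \<Longrightarrow> k < M"
    using pi_decseq gap by (metis decseq_def leD not_le_imp_less order_le_less_trans)
qed

lemma eigenspace_index_subset: "threshold \<le> \<nu> \<Longrightarrow> {k. \<pi>s k = \<nu>} \<subseteq> {..<M}"
  using eigenvalue_ge_threshold_index by blast

lemma embH_xi_expansion:
  assumes j: "j < p" and ge: "threshold \<le> lam j i"
    and F: "finite F" and F_sup: "{k. \<pi>s k = lam j i} \<subseteq> F" and i': "i' < p" and s: "s \<in> T"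
  shows "embH j (xi j i) i' s = (\<Sum>k\<in>F. ipH p T (embH j (xi j i)) (\<psi> k) * \<psi> k i' s)"
  using ge pos
  by (intro eigensysH_eigenvector_expansion[OF eig integrable selfadjoint eigenvectorH_embH_xi[OF j] _ F F_sup i' s])
    simp

lemma lam_ge_threshold_iff:
  assumes j: "j < p"
  shows "threshold \<le> lam j i \<longleftrightarrow> lam j i \<in> \<pi>s ` {..<M}"
proof
  assume ge: "threshold \<le> lam j i"
  show "lam j i \<in> \<pi>s ` {..<M}"
  proof (rule ccontr)
    assume "lam j i \<notin> \<pi>s ` {..<M}"
    with eigenspace_index_subset[OF ge] have "{k. \<pi>s k = lam j i} \<subseteq> {}" by (force simp: image_iff)
    then have "ipH p T (embH j (xi j i)) (embH j (xi j i)) = ipH p T (\<lambda>_ _. 0) (embH j (xi j i))"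
      by (intro ipH_cong) (simp_all add: embH_xi_expansion[OF j ge finite.emptyI])
    then show False using j by (simp add: ipH_embH_embH xi_orthonormal)
  qed
next
  assume "lam j i \<in> \<pi>s ` {..<M}"
  then obtain k where "k < M" and "lam j i = \<pi>s k" by blast
  then show "threshold \<le> lam j i" using eigenvalue_ge_threshold_index[of k] by simp
qed

text \<open>The embedded eigenfunctions of \<open>K\<^sub>j\<close> with eigenvalue at least \<open>threshold\<close> are orthonormal
  and lie in the span of \<open>\<psi> 0, \<dots>, \<psi> (M - 1)\<close>, so Bessel's inequality bounds their number by \<open>M\<close>.\<close>

lemma card_above_threshold_le:
  assumes j: "j < p" and I: "finite I" and I_sub: "I \<subseteq> {i. threshold \<le> lam j i}"
  shows "card I \<le> M"
proof -
  define e where "e i = embH j (xi j i)" for i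
  define c where "c i k = ipH p T (e i) (\<psi> k)" for i k
  have e: "inH p T (e i)" for i unfolding e_def by (rule inH_embH[OF j xi[OF j]])
  have e_orthonormal: "ipH p T (e i) (e i') = (if i = i' then 1 else 0)" for i i'
    unfolding e_def using j by (simp add: ipH_embH_embH xi_orthonormal)
  have norm_e: "(\<Sum>k<M. (c i k)\<^sup>2) = 1" if i: "i \<in> I" for i
  proof -
    have ge: "threshold \<le> lam j i" using I_sub i by blast
    have "1 = ipH p T (e i) (e i)" by (simp add: e_orthonormal)
    also have "\<dots> = ipH p T (\<lambda>i' s. \<Sum>k<M. c i k * \<psi> k i' s) (e i)"
      unfolding c_def e_def
      by (intro ipH_cong refl embH_xi_expansion[OF j ge finite_lessThan eigenspace_index_subset[OF ge]])
    also have "\<dots> = (\<Sum>k<M. c i k * ipH p T (\<psi> k) (e i))"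
      by (rule ipH_lincomb_left[OF finite_lessThan psi e])
    finally show ?thesis unfolding c_def by (simp add: ipH_commute power2_eq_square)
  qed
  have Bessel: "(\<Sum>i\<in>I. (c i k)\<^sup>2) \<le> 1" for k
    using Bessel_inequality_H[OF I e e_orthonormal psi, of k] unfolding c_def
    by (simp add: ipH_commute[of p T "\<psi> k"] psi_orthonormal)
  have "real (card I) = (\<Sum>i\<in>I. \<Sum>k<M. (c i k)\<^sup>2)" by (simp add: norm_e)
  also have "\<dots> = (\<Sum>k<M. \<Sum>i\<in>I. (c i k)\<^sup>2)" by (rule sum.swap)
  also have "\<dots> \<le> (\<Sum>k<M. 1)" by (intro sum_mono Bessel)
  finally show ?thesis by simp
qed

lemma above_threshold_eq_lessThan:
  assumes j: "j < p"
  shows "{i. threshold \<le> lam j i} = {..<card {i. i < M \<and> lam j i \<in> \<pi>s ` {..<M}}}"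
proof -
  let ?S = "{i. threshold \<le> lam j i}"
  have "finite ?S"
  proof (rule ccontr)
    assume "infinite ?S"
    then obtain I where "I \<subseteq> ?S" "finite I" "card I = Suc M"
      using infinite_arbitrarily_large by blast
    with card_above_threshold_le[OF j] show False by fastforce
  qed
  have "?S = {..<card ?S}"
  proof (rule finite_downclosed_eq_lessThan[OF \<open>finite ?S\<close>])
    fix x y assume "x \<in> ?S" "y \<le> x"
    then show "y \<in> ?S" using lam_decseq[OF j] by (auto simp: decseq_def intro: order_trans)
  qed
  then obtain n where S: "?S = {..<n}" by blast
  have "n \<le> M" using card_above_threshold_le[OF j finite_lessThan, of n] S by simp
  have "lam j i \<in> \<pi>s ` {..<M} \<longleftrightarrow> i < n" for i
    using S lam_ge_threshold_iff[OF j, of i] by blast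
  with \<open>n \<le> M\<close> have "{i. i < M \<and> lam j i \<in> \<pi>s ` {..<M}} = {..<n}" by auto
  with S show ?thesis by simp
qed

lemma eigenspace_Parseval:
  assumes \<nu>: "\<nu> \<in> \<pi>s ` {..<M}" and y: "inH p T y"
  shows "(\<Sum>k | \<pi>s k = \<nu>. (ipH p T y (\<psi> k))\<^sup>2) = (\<Sum>j<p. \<Sum>i | lam j i = \<nu>. (ip1 T (y j) (xi j i))\<^sup>2)"
proof -
  have ge: "threshold \<le> \<nu>" using \<nu> eigenvalue_ge_threshold_index by blast
  have "\<nu> \<noteq> 0" using ge pos by simp
  define F where "F = {k. \<pi>s k = \<nu>}"
  define G where "G j = {i. lam j i = \<nu>}" for j
  define E where "E = Sigma {..<p} G"
  define w where "w e = embH (fst e) (xi (fst e) (snd e))" for e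
  have F: "finite F" unfolding F_def using eigenspace_index_subset[OF ge] finite_subset by blast
  have G: "finite (G j)" if "j < p" for j
  proof (rule finite_subset)
    show "G j \<subseteq> {i. threshold \<le> lam j i}" unfolding G_def using ge by auto
  qed (subst above_threshold_eq_lessThan[OF that], simp)
  have E: "finite E" unfolding E_def using G by (intro finite_SigmaI) auto
  have w: "inH p T (w e)" if "e \<in> E" for e
    using that xi unfolding E_def w_def by (auto intro: inH_embH)
  have w_expansion: "w e j t = (\<Sum>k\<in>F. ipH p T (w e) (\<psi> k) * \<psi> k j t)"
    if "e \<in> E" "j < p" "t \<in> T" for e j t
    using that ge F unfolding E_def G_def F_def w_def
    by (auto intro!: embH_xi_expansion)
  have v_expansion: "\<psi> k j t = (\<Sum>e\<in>E. ipH p T (\<psi> k) (w e) * w e j t)"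
    if k: "k \<in> F" and j: "j < p" and t: "t \<in> T" for k j t
  proof -
    have "(\<Sum>e\<in>E. ipH p T (\<psi> k) (w e) * w e j t)
        = (\<Sum>j'<p. \<Sum>i\<in>G j'. ip1 T (\<psi> k j') (xi j' i) * embH j' (xi j' i) j t)"
      unfolding E_def w_def using G by (auto simp: sum.Sigma ipH_embH_right intro!: sum.cong)
    also have "\<dots> = (\<Sum>j'<p. if j' = j then (\<Sum>i\<in>G j. ip1 T (\<psi> k j) (xi j i) * xi j i t) else 0)"
      by (intro sum.cong refl) (simp add: embH_component)
    also have "\<dots> = (\<Sum>i\<in>G j. ip1 T (\<psi> k j) (xi j i) * xi j i t)"
      using j by simp
    also have "\<dots> = \<psi> k j t"
      using k unfolding G_def F_def
      by (intro psi_component_expansion[symmetric, OF j \<open>\<nu> \<noteq> 0\<close> G[OF j, unfolded G_def] order_refl _ t]) simp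
    finally show ?thesis ..
  qed
  have "(\<Sum>k\<in>F. (ipH p T y (\<psi> k))\<^sup>2) = (\<Sum>e\<in>E. (ipH p T y (w e))\<^sup>2)"
    using ipH_sum_squares_eq_if_same_span[OF F E psi w psi_orthonormal w_expansion v_expansion y] ..
  also have "\<dots> = (\<Sum>j<p. \<Sum>i\<in>G j. (ip1 T (y j) (xi j i))\<^sup>2)"
    unfolding E_def w_def using G by (auto simp: sum.Sigma ipH_embH_right intro!: sum.cong)
  finally show ?thesis unfolding F_def G_def .
qed

lemma fMMD2_eq_sum_fmd2:
  assumes x: "inH p T x" and \<mu>: "inH p T \<mu>"
  shows "fMMD2 p T x \<mu> \<pi>s \<psi> M
       = (\<Sum>j<p. fmd2 T (x j) (\<mu> j) (lam j) (xi j) (card {i. i < M \<and> lam j i \<in> \<pi>s ` {..<M}}))"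
proof -
  define y where "y = (\<lambda>j t. x j t - \<mu> j t)"
  define L where "L = \<pi>s ` {..<M}"
  define m where "m j = card {i. i < M \<and> lam j i \<in> L}" for j
  define Y where "Y j \<nu> = (\<Sum>i | lam j i = \<nu>. (ip1 T (y j) (xi j i))\<^sup>2)" for j \<nu>
  have y: "inH p T y" unfolding y_def using x \<mu> by (rule inH_diff)
  have ge: "threshold \<le> \<nu>" if "\<nu> \<in> L" for \<nu>
    using that eigenvalue_ge_threshold_index unfolding L_def by blast
  have "fMMD2 p T x \<mu> \<pi>s \<psi> M = (\<Sum>k<M. (ipH p T y (\<psi> k))\<^sup>2 / \<pi>s k)"
    unfolding fMMD2_def y_def ..
  also have "\<dots> = (\<Sum>\<nu>\<in>L. (\<Sum>k\<in>{k \<in> {..<M}. \<pi>s k = \<nu>}. (ipH p T y (\<psi> k))\<^sup>2) / \<nu>)"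
    unfolding L_def by (intro sum_divide_group_by_value) auto
  also have "\<dots> = (\<Sum>\<nu>\<in>L. (\<Sum>j<p. Y j \<nu>) / \<nu>)"
  proof (intro sum.cong refl)
    fix \<nu> assume "\<nu> \<in> L"
    then have "{k \<in> {..<M}. \<pi>s k = \<nu>} = {k. \<pi>s k = \<nu>}" using eigenspace_index_subset[OF ge] by blast
    then show "(\<Sum>k\<in>{k \<in> {..<M}. \<pi>s k = \<nu>}. (ipH p T y (\<psi> k))\<^sup>2) / \<nu> = (\<Sum>j<p. Y j \<nu>) / \<nu>"
      using eigenspace_Parseval[OF _ y] \<open>\<nu> \<in> L\<close> unfolding Y_def L_def by simp
  qed
  also have "\<dots> = (\<Sum>j<p. \<Sum>\<nu>\<in>L. Y j \<nu> / \<nu>)"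
    by (simp add: sum_divide_distrib sum.swap[of _ L])
  also have "\<dots> = (\<Sum>j<p. fmd2 T (x j) (\<mu> j) (lam j) (xi j) (m j))"
  proof (intro sum.cong refl)
    fix j assume "j \<in> {..<p}"
    then have below: "i < m j \<longleftrightarrow> threshold \<le> lam j i" for i
      using above_threshold_eq_lessThan[of j] unfolding m_def L_def by (auto simp: set_eq_iff)
    have "fmd2 T (x j) (\<mu> j) (lam j) (xi j) (m j) = (\<Sum>i<m j. (ip1 T (y j) (xi j i))\<^sup>2 / lam j i)"
      unfolding fmd2_def y_def ..
    also have "\<dots> = (\<Sum>\<nu>\<in>L. (\<Sum>i\<in>{i \<in> {..<m j}. lam j i = \<nu>}. (ip1 T (y j) (xi j i))\<^sup>2) / \<nu>)"
      using below \<open>j \<in> {..<p}\<close> lam_ge_threshold_iff unfolding L_def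
      by (intro sum_divide_group_by_value) auto
    also have "\<dots> = (\<Sum>\<nu>\<in>L. Y j \<nu> / \<nu>)"
      unfolding Y_def using below ge by (intro sum.cong refl arg_cong2[where f = "(/)"] sum.cong) auto
    finally show "(\<Sum>\<nu>\<in>L. Y j \<nu> / \<nu>) = fmd2 T (x j) (\<mu> j) (lam j) (xi j) (m j)" ..
  qed
  finally show ?thesis unfolding m_def L_def .
qed

end

theorem lemma2:
  fixes P :: "'w measure" and X :: "'w \<Rightarrow> nat \<Rightarrow> real \<Rightarrow> real"
    and p M :: nat and a b :: real
    and pis :: "nat \<Rightarrow> real" and psi :: "nat \<Rightarrow> nat \<Rightarrow> real \<Rightarrow> real"
    and lam :: "nat \<Rightarrow> nat \<Rightarrow> real" and xi :: "nat \<Rightarrow> nat \<Rightarrow> real \<Rightarrow> real"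
    and m :: "nat \<Rightarrow> nat"
  assumes "a < b" and "0 < p"
    and proc: "L2_cont_process P p {a..b} X"
    and uncorr: "\<forall>i<p. \<forall>j<p. i \<noteq> j \<longrightarrow> (\<forall>s\<in>{a..b}. \<forall>t\<in>{a..b}. cov_kernel P X i j s t = 0)"
    and eigC: "eigensysH p {a..b} (cov_kernel P X) \<pi>s psi"
    and eigK: "\<forall>j<p. eigensys1 {a..b} (cov_kernel P X j j) (lam j) (xi j)"
    and "0 < M" and gap: "\<pi>s (M - 1) > \<pi>s M" and pos: "\<pi>s (M - 1) > 0"
    and m_def: "\<forall>j<p. m j = card {i. i < M \<and> lam j i \<in> \<pi>s ` {..<M}}"
    and sumM: "M = (\<Sum>j<p. m j)"
  shows "\<forall>w\<in>space P.
           fMMD2 p {a..b} (X w) (mean_fun P X) \<pi>s psi M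
         = (\<Sum>j<p. fmd2 {a..b} (X w j) (mean_fun P X j) (lam j) (xi j) (m j))"
proof -
  have cont: "continuous_on ({a..b} \<times> {a..b}) (\<lambda>(s, t). cov_kernel P X i j s t)"
    if "i < p" "j < p" for i j
    using L2_cont_process_cov_kernel_continuous[OF proc that] .
  interpret diagonal_covariance_gap p "{a..b}" "cov_kernel P X" \<pi>s psi lam xi M
  proof
    show "covop_integrable p {a..b} (cov_kernel P X)"
      by (rule covop_integrable_if_continuous[OF compact_Icc cont])
    show "covop_selfadjoint p {a..b} (cov_kernel P X)"
      by (rule covop_selfadjoint_if_continuous_symmetric[OF compact_Icc cont cov_kernel_swap])
  qed (use uncorr eigC eigK gap pos in auto)
  have mean: "inH p {a..b} (mean_fun P X)"
    unfolding inH_def using L2_if_continuous_on[OF compact_Icc L2_cont_process_mean_continuous[OF proc]] by blast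
  show ?thesis
  proof
    fix w assume "w \<in> space P"
    then have "inH p {a..b} (X w)" using proc unfolding L2_cont_process_def by blast
    from fMMD2_eq_sum_fmd2[OF this mean] show "fMMD2 p {a..b} (X w) (mean_fun P X) \<pi>s psi M
         = (\<Sum>j<p. fmd2 {a..b} (X w j) (mean_fun P X j) (lam j) (xi j) (m j))"
      using m_def by simp
  qed
qed

end
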